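(* Fix $\alpha\in(0,1)$ and $\nu,\tau\ge0$ with $\nu>0$ and $\nu+\tau<\alpha$. Let $\hat q=\hat q(y)$ be any quantity such that, for the true $P$, $$P\left\{\hat q\ge q^{(\alpha-\nu-\tau)}_{\Gamma_\nu(P)},\ y\in A_\nu(P)\right\}\ge1-\tau.$$ (For example, $\hat q=\sup_{P'\in B_\nu(y)}q^{(\alpha-\nu)}_{\Gamma_\nu(P')}$ satisfies this with $\tau=0$.) Then $$P\left\{\theta_\gamma\in\left(\hat\theta_\gamma\pm\hat q\,\hat\sigma_\gamma\right),\ \forall\gamma\in\widehat\Gamma(y)\right\}\ge1-\alpha.$$
   Context: Setting: a family $\mathcal P$ of distributions of $y$, targets $\{\theta_\gamma(P)\}_{\gamma\in\Gamma}$ (written $\theta_\gamma$), a selection rule $y\mapsto\widehat\Gamma(y)\subseteq\Gamma$. For each $\gamma$ there are an estimator $\hat\theta_\gamma$ and a standard error $\hat\sigma_\gamma\ge0$ (functions of $y$), and for every $\Gamma'\subseteq\Gamma$ and $\beta\in(0,1)$ a number $q^\beta_{\Gamma'}$ such that the intervals $(\hat\theta_\gamma\pm q^\beta_{\Gamma'}\hat\sigma_\gamma)$ are simultaneously valid: $P\{\theta_\gamma\in(\hat\theta_\gamma\pm q^\beta_{\Gamma'}\hat\sigma_\gamma)\ \forall\gamma\in\Gamma'\}\ge1-\beta$ for all $P\in\mathcal P$. $A_\nu(P)$ is a set with $P\{y\in A_\nu(P)\}\ge1-\nu$; $\Gamma_\nu(P)=\bigcup_{y'\in A_\nu(P)}\widehat\Gamma(y')$;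 $B_\nu(y)=\{P\in\mathcal P: y\in A_\nu(P)\}$. *)

theory Defs
  imports "HOL-Probability.Probability"
begin

definition Gamma_nu :: "('y \<Rightarrow> 'g set) \<Rightarrow> 'y set \<Rightarrow> 'g set" where
  "Gamma_nu Ghat A = (\<Union>y'\<in>A. Ghat y')"

definition in_pm :: "real \<Rightarrow> real \<Rightarrow> real \<Rightarrow> real \<Rightarrow> bool" where
  "in_pm t c q s \<longleftrightarrow> c - q * s < t \<and> t < c + q * s"

end

theory Submission
  imports Defs
begin

text \<open>On the event y \<in> A(P) the data-dependent selection is contained in the fixed set
  Gamma_nu(P), so the simultaneous intervals for Gamma_nu(P) at level \<alpha> - \<nu> - \<tau> cover every
  selected target, and widening the critical value to qhat y preserves coverage. The two bad
  events (miscoverage for Gamma_nu(P), and qhat y being too small or y \<notin> A(P)) have probability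
  at most \<alpha> - \<nu> - \<tau> and \<tau>, so a union bound leaves coverage at least 1 - \<alpha> + \<nu>. The event y \<notin> A(P) is already
  charged to \<tau>.\<close>

lemma (in prob_space) prob_Int_ge:
  assumes "A \<in> events" "B \<in> events"
  shows "prob A + prob B - 1 \<le> prob (A \<inter> B)"
proof -
  have "prob (A \<union> B) + prob (A \<inter> B) = prob A + prob B"
    using assms measure_Un3[of A M B] by (simp add: fmeasurable_def emeasure_eq_measure)
  moreover have "prob (A \<union> B) \<le> 1" by (rule prob_le_1)
  ultimately show ?thesis by linarith
qed

lemma in_pm_mono:
  assumes "in_pm t c q s" "q \<le> q'" "0 \<le> s"
  shows "in_pm t c q' s"
proof -
  have "q * s \<le> q' * s" using assms(2,3) by (rule mult_right_mono)
  with assms(1) show ?thesis unfolding in_pm_def by linarith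
qed

lemma Gamma_nu_superset: "y \<in> A \<Longrightarrow> Ghat y \<subseteq> Gamma_nu Ghat A"
  unfolding Gamma_nu_def by blast

theorem proposition8:
  fixes Pfam :: "'y measure set" and P :: "'y measure"
    and theta :: "'g \<Rightarrow> 'y measure \<Rightarrow> real"
    and theta_hat sigma_hat :: "'g \<Rightarrow> 'y \<Rightarrow> real"
    and q :: "'g set \<Rightarrow> real \<Rightarrow> real"
    and Ghat :: "'y \<Rightarrow> 'g set"
    and A :: "'y measure \<Rightarrow> 'y set"
    and qhat :: "'y \<Rightarrow> real"
    and \<alpha> \<nu> \<tau> :: real
  assumes fam: "\<forall>P'\<in>Pfam. prob_space P'"
    and P_in: "P \<in> Pfam"
    and sigma_nonneg: "\<forall>g y. 0 \<le> sigma_hat g y"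
    and valid: "\<forall>P'\<in>Pfam. \<forall>G \<beta>. 0 < \<beta> \<and> \<beta> < 1 \<longrightarrow>
        measure P' {y \<in> space P'. \<forall>g\<in>G. in_pm (theta g P') (theta_hat g y) (q G \<beta>) (sigma_hat g y)}
          \<ge> 1 - \<beta>"
    and A_prob: "\<forall>P'\<in>Pfam. measure P' {y \<in> space P'. y \<in> A P'} \<ge> 1 - \<nu>"
    and alpha: "0 < \<alpha>" "\<alpha> < 1"
    and nu: "0 < \<nu>" and tau: "0 \<le> \<tau>" and sum_lt: "\<nu> + \<tau> < \<alpha>"
    and qhat_prop: "measure P {y \<in> space P.
        qhat y \<ge> q (Gamma_nu Ghat (A P)) (\<alpha> - \<nu> - \<tau>) \<and> y \<in> A P} \<ge> 1 - \<tau>"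
    and meas: "{y \<in> space P. \<forall>g\<in>Ghat y. in_pm (theta g P) (theta_hat g y) (qhat y) (sigma_hat g y)}
        \<in> sets P"
  shows "measure P {y \<in> space P. \<forall>g\<in>Ghat y.
      in_pm (theta g P) (theta_hat g y) (qhat y) (sigma_hat g y)} \<ge> 1 - \<alpha>"
proof -
  interpret prob_space P using fam P_in by blast
  define \<beta> where "\<beta> = \<alpha> - \<nu> - \<tau>"
  define G where "G = Gamma_nu Ghat (A P)"
  define C where "C = {y \<in> space P. \<forall>g\<in>G. in_pm (theta g P) (theta_hat g y) (q G \<beta>) (sigma_hat g y)}"
  define Q where "Q = {y \<in> space P. qhat y \<ge> q G \<beta> \<and> y \<in> A P}"
  define T where "T = {y \<in> space P. \<forall>g\<in>Ghat y. in_pm (theta g P) (theta_hat g y) (qhat y) (sigma_hat g y)}"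
  have \<beta>: "0 < \<beta>" "\<beta> < 1" using alpha nu tau sum_lt unfolding \<beta>_def by auto
  have prob_C: "prob C \<ge> 1 - \<beta>" using valid P_in \<beta> unfolding C_def by blast
  have prob_Q: "prob Q \<ge> 1 - \<tau>" using qhat_prop unfolding Q_def G_def \<beta>_def .
  \<comment> \<open>Both events have positive probability, hence are measurable.\<close>
  have events: "C \<in> events" "Q \<in> events"
    using prob_C prob_Q \<beta> sum_lt nu alpha measure_notin_sets by force+
  have "C \<inter> Q \<subseteq> T"
    using sigma_nonneg Gamma_nu_superset[of _ "A P" Ghat]
    unfolding C_def Q_def T_def G_def by (blast intro: in_pm_mono)
  then have "prob (C \<inter> Q) \<le> prob T"
    using meas unfolding T_def by (intro finite_measure_mono)
  with prob_Int_ge[OF events] prob_C prob_Q nu show ?thesis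
    unfolding T_def \<beta>_def by linarith
qed

end
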